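(* Let $n\ge2$ and let $\mathbf{r}\in\mathbb{R}^n$ have pairwise distinct coordinates; let $r_{(n)}=\max_ir_i$, $r_{(1)}=\min_ir_i$, and let $i^\star,j^\star$ be the indices with $r_{i^\star}=r_{(n)}$, $r_{j^\star}=r_{(1)}$. Then $$\max_{\boldsymbol{\pi}\in\Delta_n}\gamma(\boldsymbol{\pi},\mathbf{r})=\log\Big(\frac{e^{r_{(n)}}-e^{r_{(1)}}}{r_{(n)}-r_{(1)}}\Big)-\frac{e^{r_{(n)}}r_{(1)}-e^{r_{(1)}}r_{(n)}}{e^{r_{(n)}}-e^{r_{(1)}}}-1,$$ and the maximizer $\boldsymbol{\pi}^\star$ is unique and given by $$\pi^\star_{i^\star}=\frac{e^{r_{i^\star}}-e^{r_{j^\star}}-(r_{i^\star}-r_{j^\star})e^{r_{j^\star}}}{(r_{i^\star}-r_{j^\star})(e^{r_{i^\star}}-e^{r_{j^\star}})},\qquad\pi^\star_{j^\star}=1-\pi^\star_{i^\star},\qquad\pi^\star_k=0\ (k\notin\{i^\star,j^\star\}).$$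
   Context: $\Delta_n=\{\mathbf{x}\in[0,1]^n:\sum_ix_i=1\}$; $\supp(\mathbf{x})=\{i:x_i>0\}$. For $\boldsymbol{\pi}\in\Delta_n$ and $\mathbf{r}\in\mathbb{R}^n$, $\gamma(\boldsymbol{\pi},\mathbf{r})=\log\big(\sum_{i\in\supp(\boldsymbol{\pi})}\pi_ie^{r_i}\big)-\sum_{i\in\supp(\boldsymbol{\pi})}\pi_ir_i$. *)

theory Defs
  imports "HOL-Analysis.Analysis"
begin

text \<open>Vectors in R^n are represented as functions nat => real with coordinates
  indexed by 0..n-1; points of the prob_simplex are required to vanish outside {..<n}.\<close>

definition prob_simplex :: "nat \<Rightarrow> (nat \<Rightarrow> real) set" where
  "prob_simplex n = {x. (\<forall>i<n. 0 \<le> x i \<and> x i \<le> 1) \<and> (\<forall>i. n \<le> i \<longrightarrow> x i = 0)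
                   \<and> (\<Sum>i<n. x i) = 1}"

definition pos_supp :: "nat \<Rightarrow> (nat \<Rightarrow> real) \<Rightarrow> nat set" where
  "pos_supp n x = {i. i < n \<and> x i > 0}"

definition gamma :: "nat \<Rightarrow> (nat \<Rightarrow> real) \<Rightarrow> (nat \<Rightarrow> real) \<Rightarrow> real" where
  "gamma n p r = ln (\<Sum>i\<in>pos_supp n p. p i * exp (r i)) - (\<Sum>i\<in>pos_supp n p. p i * r i)"

end

theory Submission
  imports Defs
begin

text \<open>Let a and b be the smallest and largest coordinate of r, E = \<Sum> p i exp (r i) and
  M = \<Sum> p i r i. On [a, b] the exponential lies below its chord \<ell>, strictly in the
  interior, and \<ell> is affine, so E \<le> \<ell>(M) with equality iff p has no mass at interior points.
  With s the slope of the chord, ln \<ell>(M) \<le> ln s + \<ell>(M)/s - 1, and \<ell>(M)/s - M does not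
  depend on M; equality holds iff \<ell>(M) = s, which fixes M and hence the weight of p at b.\<close>

definition exp_slope :: "real \<Rightarrow> real \<Rightarrow> real" where
  "exp_slope a b = (exp b - exp a) / (b - a)"

definition exp_chord :: "real \<Rightarrow> real \<Rightarrow> real \<Rightarrow> real" where
  "exp_chord a b x = exp a + (x - a) * exp_slope a b"

text \<open>The next two constants are written exactly as in the paper's formulas, so that the
  main theorem is obtained from them by unfolding.\<close>

definition gamma_max :: "real \<Rightarrow> real \<Rightarrow> real" where
  "gamma_max a b = ln (exp_slope a b) - (exp b * a - exp a * b) / (exp b - exp a) - 1"

definition gamma_opt_weight :: "real \<Rightarrow> real \<Rightarrow> real" where
  "gamma_opt_weight a b = (exp b - exp a - (b - a) * exp a) / ((b - a) * (exp b - exp a))"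

lemma exp_slope_pos: "a < b \<Longrightarrow> 0 < exp_slope a b"
  by (simp add: exp_slope_def)

lemma exp_tangent_less:
  fixes x y :: real
  assumes "x \<noteq> y"
  shows "exp x * (1 + (y - x)) < exp y"
proof -
  have "1 + (y - x) < exp (y - x)"
    using exp_minus_greater[of "x - y"] assms by simp
  then show ?thesis by (simp add: exp_diff field_simps)
qed

lemma exp_less_exp_chord:
  fixes a b x :: real
  assumes "a < x" "x < b"
  shows "exp x < exp_chord a b x"
proof -
  have "(b - x) * (exp x * (1 + (a - x))) < (b - x) * exp a"
    using exp_tangent_less[of x a] assms by simp
  moreover have "(x - a) * (exp x * (1 + (b - x))) < (x - a) * exp b"
    using exp_tangent_less[of x b] assms by simp
  moreover have "(b - x) * (exp x * (1 + (a - x))) + (x - a) * (exp x * (1 + (b - x))) = (b - a) * exp x"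
    by (simp add: algebra_simps)
  ultimately have "(b - a) * exp x < (b - x) * exp a + (x - a) * exp b"
    by linarith
  then show ?thesis
    using assms by (simp add: exp_chord_def exp_slope_def field_simps)
qed

lemma exp_chord_left [simp]: "exp_chord a b a = exp a"
  and exp_chord_right [simp]: "a \<noteq> b \<Longrightarrow> exp_chord a b b = exp b"
  by (simp_all add: exp_chord_def exp_slope_def)

lemma exp_le_exp_chord:
  fixes a b x :: real
  assumes "a \<le> x" "x \<le> b"
  shows "exp x \<le> exp_chord a b x"
  using assms exp_less_exp_chord[of a x b] by (cases "x = a"; cases "x = b") auto

lemma sum_exp_chord:
  assumes "sum p I = 1"
  shows "(\<Sum>i\<in>I. p i * exp_chord a b (x i)) = exp_chord a b (\<Sum>i\<in>I. p i * x i)"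
proof -
  have "(\<Sum>i\<in>I. p i * exp_chord a b (x i))
      = (\<Sum>i\<in>I. p i * (exp a - a * exp_slope a b) + p i * x i * exp_slope a b)"
    by (rule sum.cong) (simp_all add: exp_chord_def algebra_simps)
  also have "\<dots> = (\<Sum>i\<in>I. p i) * (exp a - a * exp_slope a b)
                    + (\<Sum>i\<in>I. p i * x i) * exp_slope a b"
    by (simp add: sum.distrib sum_distrib_right)
  also have "\<dots> = exp_chord a b (\<Sum>i\<in>I. p i * x i)"
    by (simp add: assms exp_chord_def algebra_simps)
  finally show ?thesis .
qed

lemma sum_exp_le_exp_chord:
  assumes "sum p I = 1" "\<forall>i\<in>I. 0 \<le> p i" "\<forall>i\<in>I. a \<le> x i \<and> x i \<le> b"
  shows "(\<Sum>i\<in>I. p i * exp (x i)) \<le> exp_chord a b (\<Sum>i\<in>I. p i * x i)"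
proof -
  have "(\<Sum>i\<in>I. p i * exp (x i)) \<le> (\<Sum>i\<in>I. p i * exp_chord a b (x i))"
    using assms by (intro sum_mono mult_left_mono exp_le_exp_chord) auto
  then show ?thesis
    using sum_exp_chord[OF assms(1)] by simp
qed

lemma sum_exp_eq_exp_chord_iff:
  assumes "sum p I = 1" "\<forall>i\<in>I. 0 \<le> p i" "\<forall>i\<in>I. a \<le> x i \<and> x i \<le> b"
  shows "(\<Sum>i\<in>I. p i * exp (x i)) = exp_chord a b (\<Sum>i\<in>I. p i * x i)
           \<longleftrightarrow> (\<forall>i\<in>I. a < x i \<and> x i < b \<longrightarrow> p i = 0)"
proof -
  define gap where "gap i = p i * (exp_chord a b (x i) - exp (x i))" for i
  have "finite I"
    using assms(1) sum.infinite by fastforce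
  have gap_nonneg: "\<forall>i\<in>I. 0 \<le> gap i"
    using assms by (auto simp: gap_def intro!: mult_nonneg_nonneg exp_le_exp_chord)
  have gap_eq_0_iff: "gap i = 0 \<longleftrightarrow> \<not> (a < x i \<and> x i < b) \<or> p i = 0" if "i \<in> I" for i
    using that assms exp_less_exp_chord[of a "x i" b]
    by (cases "x i = a"; cases "x i = b") (auto simp: gap_def)
  have "exp_chord a b (\<Sum>i\<in>I. p i * x i) - (\<Sum>i\<in>I. p i * exp (x i)) = sum gap I"
    by (simp add: gap_def right_diff_distrib sum_subtractf sum_exp_chord[OF assms(1), symmetric])
  then show ?thesis
    using sum_nonneg_eq_0_iff[OF \<open>finite I\<close> gap_nonneg[rule_format]] gap_eq_0_iff by auto
qed

lemma exp_chord_div_exp_slope: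
  "a < b \<Longrightarrow> exp_chord a b m / exp_slope a b = exp a / exp_slope a b + (m - a)"
  using exp_slope_pos[of a b] by (simp add: exp_chord_def field_simps)

lemma gamma_opt_weight_mult_diff:
  assumes "a < b"
  shows "gamma_opt_weight a b * (b - a) = 1 - exp a / exp_slope a b"
proof -
  define d D where "d = b - a" and "D = exp b - exp a"
  have "0 < d" "0 < D" using assms by (auto simp: d_def D_def)
  have w: "gamma_opt_weight a b = (D - d * exp a) / (d * D)" and s: "exp_slope a b = D / d"
    by (simp_all add: gamma_opt_weight_def exp_slope_def d_def D_def)
  show ?thesis
    unfolding w s d_def[symmetric] using \<open>0 < d\<close> \<open>0 < D\<close> by (simp add: field_simps)
qed

lemma gamma_opt_weight_pos:
  assumes "a < b"
  shows "0 < gamma_opt_weight a b"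
proof -
  have "exp a * (1 + (b - a)) < exp b"
    using exp_tangent_less[of a b] assms by simp
  then show ?thesis
    unfolding gamma_opt_weight_def using assms
    by (intro divide_pos_pos mult_pos_pos) (auto simp: algebra_simps)
qed

lemma gamma_opt_weight_less_one:
  assumes "a < b"
  shows "gamma_opt_weight a b < 1"
proof -
  define d D where "d = b - a" and "D = exp b - exp a"
  have "exp b * (1 + (a - b)) < exp a"
    using exp_tangent_less[of b a] assms by simp
  then have "D - d * exp a < d * D"
    by (simp add: d_def D_def algebra_simps)
  moreover have "0 < d * D" using assms by (simp add: d_def D_def)
  ultimately show ?thesis
    by (simp add: gamma_opt_weight_def d_def[symmetric] D_def[symmetric])
qed

lemma ln_exp_chord_minus_eq:
  assumes "a < b" "0 < exp_chord a b m"
  shows "ln (exp_chord a b m) - m = gamma_max a b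
           + (ln (exp_chord a b m / exp_slope a b) - (exp_chord a b m / exp_slope a b - 1))"
proof -
  have "ln (exp_chord a b m / exp_slope a b) = ln (exp_chord a b m) - ln (exp_slope a b)"
    using exp_slope_pos[OF assms(1)] assms(2) by (simp add: ln_div)
  moreover have "(exp b * a - exp a * b) / (exp b - exp a) = a - exp a / exp_slope a b"
    using assms(1) by (simp add: exp_slope_def field_simps)
  ultimately show ?thesis
    unfolding gamma_max_def using exp_chord_div_exp_slope[OF assms(1), of m] by linarith
qed

lemma ln_exp_chord_le_gamma_max:
  assumes "a < b" "0 < exp_chord a b m"
  shows "ln (exp_chord a b m) - m \<le> gamma_max a b"
  using ln_exp_chord_minus_eq[OF assms] ln_le_minus_one[of "exp_chord a b m / exp_slope a b"]
    exp_slope_pos[OF assms(1)] assms(2) by simp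

lemma ln_exp_chord_eq_gamma_max_iff:
  assumes "a < b" "0 < exp_chord a b m"
  shows "ln (exp_chord a b m) - m = gamma_max a b \<longleftrightarrow> m = a + gamma_opt_weight a b * (b - a)"
proof -
  have "ln (exp_chord a b m) - m = gamma_max a b \<longleftrightarrow> exp_chord a b m / exp_slope a b = 1"
    using ln_exp_chord_minus_eq[OF assms] ln_eq_minus_one[of "exp_chord a b m / exp_slope a b"]
      exp_slope_pos[OF assms(1)] assms(2) by auto
  then show ?thesis
    using exp_chord_div_exp_slope[OF assms(1)] gamma_opt_weight_mult_diff[OF assms(1)] by auto
qed

lemma
  assumes "sum p I = 1" "\<forall>i\<in>I. 0 \<le> p i" "\<forall>i\<in>I. a \<le> x i \<and> x i \<le> b" "a < b"
  shows ln_sum_exp_minus_le_gamma_max: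
      "ln (\<Sum>i\<in>I. p i * exp (x i)) - (\<Sum>i\<in>I. p i * x i) \<le> gamma_max a b"
    and ln_sum_exp_minus_eq_gamma_max_iff:
      "ln (\<Sum>i\<in>I. p i * exp (x i)) - (\<Sum>i\<in>I. p i * x i) = gamma_max a b
           \<longleftrightarrow> (\<forall>i\<in>I. a < x i \<and> x i < b \<longrightarrow> p i = 0)
               \<and> (\<Sum>i\<in>I. p i * x i) = a + gamma_opt_weight a b * (b - a)"
proof -
  define E M where "E = (\<Sum>i\<in>I. p i * exp (x i))" and "M = (\<Sum>i\<in>I. p i * x i)"
  have "exp a = (\<Sum>i\<in>I. p i * exp a)"
    by (simp flip: sum_distrib_right add: assms(1))
  also have "\<dots> \<le> E"
    unfolding E_def using assms(2,3) by (intro sum_mono mult_left_mono) auto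
  finally have "0 < E" using exp_gt_zero[of a] by linarith
  have "E \<le> exp_chord a b M"
    unfolding E_def M_def using sum_exp_le_exp_chord[OF assms(1-3)] .
  with \<open>0 < E\<close> have "0 < exp_chord a b M" and ln_le: "ln E \<le> ln (exp_chord a b M)"
    by auto
  have chord_le: "ln (exp_chord a b M) - M \<le> gamma_max a b"
    using ln_exp_chord_le_gamma_max[OF assms(4) \<open>0 < exp_chord a b M\<close>] .
  then show "ln E - M \<le> gamma_max a b"
    using ln_le by linarith
  have "ln E = ln (exp_chord a b M) \<longleftrightarrow> E = exp_chord a b M"
    using \<open>0 < E\<close> \<open>0 < exp_chord a b M\<close> by simp
  then have "ln E - M = gamma_max a b
      \<longleftrightarrow> E = exp_chord a b M \<and> ln (exp_chord a b M) - M = gamma_max a b"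
    using ln_le chord_le by auto
  then show "ln E - M = gamma_max a b
      \<longleftrightarrow> (\<forall>i\<in>I. a < x i \<and> x i < b \<longrightarrow> p i = 0)
          \<and> M = a + gamma_opt_weight a b * (b - a)"
    unfolding E_def M_def sum_exp_eq_exp_chord_iff[OF assms(1-3)]
      ln_exp_chord_eq_gamma_max_iff[OF assms(4) \<open>0 < exp_chord a b M\<close>[unfolded M_def]] .
qed

lemma sum_pos_supp_prob_simplex:
  assumes "p \<in> prob_simplex n"
  shows "(\<Sum>i\<in>pos_supp n p. p i * f i) = (\<Sum>i<n. p i * f i)"
  using assms unfolding pos_supp_def prob_simplex_def
  by (intro sum.mono_neutral_left) force+

lemma gamma_prob_simplex:
  "p \<in> prob_simplex n \<Longrightarrow> gamma n p r = ln (\<Sum>i<n. p i * exp (r i)) - (\<Sum>i<n. p i * r i)"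
  by (simp add: gamma_def sum_pos_supp_prob_simplex)

lemma SUP_eq_and_maximizers_eq_singleton:
  fixes f :: "'a \<Rightarrow> 'b :: conditionally_complete_linorder"
  assumes "x0 \<in> S" "\<forall>x\<in>S. f x \<le> m" "\<forall>x\<in>S. f x = m \<longleftrightarrow> x = x0"
  shows "(SUP x\<in>S. f x) = m \<and> {x \<in> S. \<forall>y\<in>S. f y \<le> f x} = {x0}"
proof
  have "f x0 = m" using assms by blast
  then show "(SUP x\<in>S. f x) = m"
    using assms by (intro cSup_eq_maximum) auto
  show "{x \<in> S. \<forall>y\<in>S. f y \<le> f x} = {x0}"
  proof (intro equalityI subsetI)
    fix x assume "x \<in> {x \<in> S. \<forall>y\<in>S. f y \<le> f x}"
    then have "x \<in> S" "m \<le> f x" using assms(1) \<open>f x0 = m\<close> by auto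
    then show "x \<in> {x0}" using assms(2,3) order.antisym by blast
  qed (use assms \<open>f x0 = m\<close> in auto)
qed

locale distinct_rewards =
  fixes n :: nat and r :: "nat \<Rightarrow> real" and istar jstar :: nat
  assumes two_le_n: "n \<ge> 2"
    and r_inj: "\<forall>i<n. \<forall>j<n. i \<noteq> j \<longrightarrow> r i \<noteq> r j"
    and istar: "istar < n" "r istar = Max (r ` {..<n})"
    and jstar: "jstar < n" "r jstar = Min (r ` {..<n})"
begin

definition pstar :: "nat \<Rightarrow> real" where
  "pstar = (\<lambda>k. if k = istar then gamma_opt_weight (r jstar) (r istar)
                else if k = jstar then 1 - gamma_opt_weight (r jstar) (r istar) else 0)"

lemma r_between: "i < n \<Longrightarrow> r jstar \<le> r i \<and> r i \<le> r istar"
  using istar jstar by auto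

lemma istar_neq_jstar: "istar \<noteq> jstar"
proof
  assume "istar = jstar"
  then have "r 0 = r 1"
    using r_between[of 0] r_between[of 1] two_le_n by fastforce
  then show False
    using r_inj two_le_n by auto
qed

lemma r_jstar_less_r_istar: "r jstar < r istar"
  using r_between[of istar] r_inj istar jstar istar_neq_jstar by force

lemma r_strictly_between:
  assumes "i < n" "i \<noteq> istar" "i \<noteq> jstar"
  shows "r jstar < r i \<and> r i < r istar"
proof -
  have "r i \<noteq> r istar" "r i \<noteq> r jstar"
    using assms r_inj istar(1) jstar(1) by auto
  then show ?thesis
    using r_between[OF assms(1)] by auto
qed

lemma sum_lessThan_supported_on_ends:
  assumes "\<forall>k<n. k \<noteq> istar \<longrightarrow> k \<noteq> jstar \<longrightarrow> f k = 0"
  shows "(\<Sum>k<n. f k) = f istar + f jstar"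
proof -
  have "(\<Sum>k<n. f k) = (\<Sum>k\<in>{istar, jstar}. f k)"
    using assms istar jstar by (intro sum.mono_neutral_right) auto
  then show ?thesis
    using istar_neq_jstar by simp
qed

lemma pstar_in_prob_simplex: "pstar \<in> prob_simplex n"
  using gamma_opt_weight_pos[OF r_jstar_less_r_istar]
    gamma_opt_weight_less_one[OF r_jstar_less_r_istar] istar jstar istar_neq_jstar
  by (auto simp: prob_simplex_def pstar_def sum_lessThan_supported_on_ends)

lemma pstar_iff_optimality_conditions:
  assumes "p \<in> prob_simplex n"
  shows "(\<forall>i\<in>{..<n}. r jstar < r i \<and> r i < r istar \<longrightarrow> p i = 0)
           \<and> (\<Sum>i<n. p i * r i) = r jstar + gamma_opt_weight (r jstar) (r istar) * (r istar - r jstar)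
         \<longleftrightarrow> p = pstar" (is "?optimal \<longleftrightarrow> _")
proof
  have p: "sum p {..<n} = 1" "\<forall>i. n \<le> i \<longrightarrow> p i = 0"
    using assms by (auto simp: prob_simplex_def)
  assume ?optimal
  then have off_ends: "p k = 0" if "k \<noteq> istar" "k \<noteq> jstar" for k
    using that p(2) r_strictly_between by (cases "k < n") auto
  have p_jstar: "p jstar = 1 - p istar"
    using p(1) off_ends sum_lessThan_supported_on_ends[of p] by simp
  have "(p istar - gamma_opt_weight (r jstar) (r istar)) * (r istar - r jstar)
      = p istar * r istar + p jstar * r jstar
        - (r jstar + gamma_opt_weight (r jstar) (r istar) * (r istar - r jstar))"
    by (simp add: p_jstar algebra_simps)
  also have "\<dots> = 0"
    using \<open>?optimal\<close> off_ends sum_lessThan_supported_on_ends[of "\<lambda>i. p i * r i"] by simp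
  finally have "p istar = gamma_opt_weight (r jstar) (r istar)"
    using r_jstar_less_r_istar by simp
  then show "p = pstar"
    using p_jstar off_ends by (auto simp: pstar_def)
next
  assume "p = pstar"
  then show ?optimal
    using r_strictly_between istar_neq_jstar
    by (auto simp: pstar_def sum_lessThan_supported_on_ends algebra_simps)
qed

lemma
  assumes "p \<in> prob_simplex n"
  shows gamma_le_gamma_max: "gamma n p r \<le> gamma_max (r jstar) (r istar)"
    and gamma_eq_gamma_max_iff: "gamma n p r = gamma_max (r jstar) (r istar) \<longleftrightarrow> p = pstar"
proof -
  have p: "sum p {..<n} = 1" "\<forall>i\<in>{..<n}. 0 \<le> p i"
    using assms by (auto simp: prob_simplex_def)
  have r: "\<forall>i\<in>{..<n}. r jstar \<le> r i \<and> r i \<le> r istar"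
    using r_between by blast
  show "gamma n p r \<le> gamma_max (r jstar) (r istar)"
    using ln_sum_exp_minus_le_gamma_max[OF p r r_jstar_less_r_istar]
    by (simp add: gamma_prob_simplex[OF assms])
  show "gamma n p r = gamma_max (r jstar) (r istar) \<longleftrightarrow> p = pstar"
    using ln_sum_exp_minus_eq_gamma_max_iff[OF p r r_jstar_less_r_istar]
      pstar_iff_optimality_conditions[OF assms]
    by (simp add: gamma_prob_simplex[OF assms])
qed

end

theorem mainTheorem16:
  fixes n :: nat and r :: "nat \<Rightarrow> real" and istar jstar :: nat
  assumes "n \<ge> 2"
    and "\<forall>i<n. \<forall>j<n. i \<noteq> j \<longrightarrow> r i \<noteq> r j"
    and "istar < n" and "r istar = Max (r ` {..<n})"
    and "jstar < n" and "r jstar = Min (r ` {..<n})"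
  shows "(SUP p\<in>prob_simplex n. gamma n p r) =
           ln ((exp (r istar) - exp (r jstar)) / (r istar - r jstar))
           - (exp (r istar) * r jstar - exp (r jstar) * r istar) / (exp (r istar) - exp (r jstar)) - 1
    \<and> {p \<in> prob_simplex n. \<forall>q\<in>prob_simplex n. gamma n q r \<le> gamma n p r} =
       {(\<lambda>k. if k = istar then
                 (exp (r istar) - exp (r jstar) - (r istar - r jstar) * exp (r jstar))
                   / ((r istar - r jstar) * (exp (r istar) - exp (r jstar)))
              else if k = jstar then
                 1 - (exp (r istar) - exp (r jstar) - (r istar - r jstar) * exp (r jstar))
                   / ((r istar - r jstar) * (exp (r istar) - exp (r jstar)))
              else 0)}"
proof -
  interpret distinct_rewards n r istar jstar
    using assms by unfold_locales
  have "(SUP p\<in>prob_simplex n. gamma n p r) = gamma_max (r jstar) (r istar)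
    \<and> {p \<in> prob_simplex n. \<forall>q\<in>prob_simplex n. gamma n q r \<le> gamma n p r} = {pstar}"
    using pstar_in_prob_simplex gamma_le_gamma_max gamma_eq_gamma_max_iff
    by (intro SUP_eq_and_maximizers_eq_singleton) auto
  then show ?thesis
    unfolding gamma_max_def exp_slope_def pstar_def gamma_opt_weight_def .
qed

end
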